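(* For all positive integers $k$ and $\ell$ there exists a positive integer $n$ such that (a) $s(nk)=\ell k$, and (b) $n\le \dfrac{2^{\ell k+n_k}-2^{\mu_2(k)}}{k}$.
   Context: $s(m)$ denotes the sum of the binary digits of the positive integer $m$. For a positive integer $k$, $n_k=\lceil \log_2 k\rceil$ (the smallest nonnegative integer $n$ with $k\le 2^n$), and $\mu_2(k)$ is the exponent of $2$ in $k$, i.e. the largest $\alpha\ge 0$ with $2^\alpha\mid k$. *)

theory Defs
  imports Complex_Main "HOL-Computational_Algebra.Primes"
begin

fun bsum :: "nat \<Rightarrow> nat" where
  "bsum m = (if m = 0 then 0 else m mod 2 + bsum (m div 2))"

definition nk :: "nat \<Rightarrow> nat" where
  "nk k = (LEAST n. k \<le> 2 ^ n)"

definition mu2 :: "nat \<Rightarrow> nat" where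
  "mu2 k = multiplicity (2::nat) k"

end

theory Submission
  imports Defs
begin

(* Put L = l*k and take n = 2^L - 1.  Since k <= L < 2^L, the
   product splits into two binary blocks of length L:
     n*k = (k - 1) * 2^L + (2^L - 1 - (k - 1)),
   and the low block is the bitwise complement of k - 1 inside L bits.  The
   digit sum is additive over such blocks, and a number and its L-bit
   complement together have digit sum L; hence s(n*k) = L = l*k.
   For the size bound, k <= 2^(n_k) and 2^(mu_2 k) <= k give
     n*k = 2^L*k - k <= 2^(L + n_k) - 2^(mu_2 k). *)

declare bsum.simps[simp del]

lemma bsum_rec: "bsum m = m mod 2 + bsum (m div 2)"
  by (cases "m = 0") (simp_all add: bsum.simps[of m] bsum.simps[of 0])

lemma bsum_concat:
  assumes "b < 2 ^ r"
  shows "bsum (a * 2 ^ r + b) = bsum a + bsum b"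
  using assms
proof (induction r arbitrary: b)
  case 0
  then show ?case by (simp add: bsum.simps[of 0])
next
  case (Suc r)
  have "a * 2 ^ Suc r + b = b + 2 * (a * 2 ^ r)"
    by simp
  then have low: "(a * 2 ^ Suc r + b) mod 2 = b mod 2"
    by (simp only: mod_mult_self2)
  have high: "(a * 2 ^ Suc r + b) div 2 = a * 2 ^ r + b div 2"
    by simp
  have "bsum (a * 2 ^ r + b div 2) = bsum a + bsum (b div 2)"
    using Suc.prems by (intro Suc.IH) simp
  then show ?case
    using bsum_rec[of "a * 2 ^ Suc r + b"] bsum_rec[of b] low high by simp
qed

lemma bsum_complement:
  assumes "c < 2 ^ r"
  shows "bsum c + bsum (2 ^ r - 1 - c) = r"
  using assms
proof (induction r arbitrary: c)
  case 0
  then show ?case by (simp add: bsum.simps[of 0])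
next
  case (Suc r)
  have low: "(2 ^ Suc r - 1 - c) mod 2 = 1 - c mod 2"
    using Suc.prems by (simp add: mod2_eq_if)
  have high: "(2 ^ Suc r - 1 - c) div 2 = 2 ^ r - 1 - c div 2"
    using Suc.prems by simp
  have "bsum (c div 2) + bsum (2 ^ r - 1 - c div 2) = r"
    using Suc.prems by (intro Suc.IH) simp
  then show ?case
    using bsum_rec[of c] bsum_rec[of "2 ^ Suc r - 1 - c"] low high
    by (simp add: mod2_eq_if)
qed

lemma bsum_mult_mersenne:
  assumes "0 < k" and "k \<le> 2 ^ L"
  shows "bsum (k * (2 ^ L - 1)) = L"
proof -
  have blocks: "k * (2 ^ L - 1) = (k - 1) * 2 ^ L + (2 ^ L - 1 - (k - 1))"
    using assms by (simp add: algebra_simps diff_mult_distrib)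
  have "k - 1 < 2 ^ L"
    using assms by simp
  then show ?thesis
    using blocks bsum_concat[of "2 ^ L - 1 - (k - 1)" L "k - 1"]
      bsum_complement[of "k - 1" L]
    by simp
qed

lemma le_two_power_nk: "k \<le> 2 ^ nk k"
  unfolding nk_def by (rule LeastI[of _ k]) simp

lemma two_power_mu2_le:
  assumes "0 < k"
  shows "2 ^ mu2 k \<le> k"
  unfolding mu2_def using multiplicity_dvd[of 2 k] assms by (simp add: dvd_imp_le)

text \<open>The numerical bound for the witness 2^L - 1, stated after clearing the
  denominator k.\<close>
lemma mersenne_bound:
  assumes "0 < k"
  shows "real (2 ^ L - 1 :: nat) * real k \<le> 2 ^ (L + nk k) - 2 ^ mu2 k"
proof -
  have "real k \<le> 2 ^ nk k"
    using le_two_power_nk[of k] by (metis of_nat_le_iff of_nat_numeral of_nat_power)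
  moreover have "(2::real) ^ mu2 k \<le> real k"
    using two_power_mu2_le[OF assms] by (metis of_nat_le_iff of_nat_numeral of_nat_power)
  ultimately have "2 ^ L * real k - real k \<le> 2 ^ L * 2 ^ nk k - 2 ^ mu2 k"
    by (smt (verit) mult_left_mono zero_le_power)
  then show ?thesis
    by (simp add: of_nat_diff power_add algebra_simps)
qed

theorem mainTheorem2:
  fixes k l :: nat
  assumes "k > 0" and "l > 0"
  shows "\<exists>n::nat. n > 0 \<and> bsum (n * k) = l * k \<and>
           real n \<le> ((2::real) ^ (l * k + nk k) - 2 ^ mu2 k) / real k"
proof (intro exI conjI)
  define L where "L = l * k"
  have "k \<le> L"
    using assms by (simp add: L_def)
  also have "L < 2 ^ L"
    by simp
  finally have k_le: "k \<le> 2 ^ L"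
    by simp
  have "1 \<le> L"
    using assms by (simp add: L_def)
  then show "(2 ^ (l * k) - 1 :: nat) > 0"
    using one_less_power[of "2::nat" L] by (simp add: L_def)
  show "bsum ((2 ^ (l * k) - 1) * k) = l * k"
    using bsum_mult_mersenne[OF assms(1) k_le] by (simp add: L_def mult.commute)
  show "real (2 ^ (l * k) - 1 :: nat) \<le> (2 ^ (l * k + nk k) - 2 ^ mu2 k) / real k"
    using mersenne_bound[OF assms(1), of "l * k"] assms(1) by (simp add: pos_le_divide_eq)
qed

end
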